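(* Let $\eta>0$, let $C$ be a cost vector, and let $S=\sum_{ij\in\mathcal E}\Big[\log\sum_{x_i,x_j\in\chi}e^{-\eta C_{ij}(x_i,x_j)}+\sum_{x_i,x_j\in\chi}\frac{\eta}{d^2}C_{ij}(x_i,x_j)\Big]+\sum_{i\in\mathcal V}\Big[\log\sum_{x\in\chi}e^{-\eta C_i(x)}+\sum_{x\in\chi}\frac{\eta}{d}C_i(x)\Big]$ and $\mathcal S_0=\min\big(\|\eta C/d+\exp(-\eta C)\|_1,\,S\big)$. For any $\epsilon>0$, the EMP algorithm (run with parameters $C,\eta,\epsilon$) reaches an iterate satisfying $\|\Gamma_{ij}\mathbb 1-\Gamma_i\|_1<\epsilon$ and $\|\Gamma_{ij}^\top\mathbb 1-\Gamma_j\|_1<\epsilon$ for all $ij\in\mathcal E$ within $\lceil 4\mathcal S_0(\deg(G)+1)/\epsilon^2\rceil$ iterations for EMP-cyclic and within $\lceil 4\mathcal S_0/\epsilon^2\rceil$ iterations for EMP-greedy.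
   Context: Let $G=(\mathcal V,\mathcal E)$ be a graph with $\mathcal V=\{1,\dots,n\}$, every vertex on at least one edge, edges written as ordered pairs $ij$, $\deg(G)$ its maximum degree, and $\chi=\{0,\dots,d-1\}$. A marginal vector $\Gamma$ consists of $\Gamma_i\in\mathbb R^d$ ($i\in\mathcal V$) and $\Gamma_{ij}\in\mathbb R^{d\times d}$ ($ij\in\mathcal E$); a cost vector $C$ has the same shape; $\exp$ is entrywise, $\|\cdot\|_1$ is the sum of absolute values of all entries, $\mathbb 1$ is the all-ones vector. Define the following update maps on positive marginal vectors (all components not mentioned are unchanged): $\mathcal P_{ij\to i}$: $\Gamma_{ij}(x_i,x_j)\leftarrow\Gamma_{ij}(x_i,x_j)\sqrt{\Gamma_i(x_i)/\sum_x\Gamma_{ij}(x_i,x)}$, $\Gamma_i(x_i)\leftarrow\Gamma_i(x_i)\sqrt{\sum_x\Gamma_{ij}(x_i,x)/\Gamma_i(x_i)}$; $\mathcal P_{ij,i}$: divide $\Gamma_i$ and $\Gamma_{ij}$ each by the sum of its entries; $\mathcal P_{ij\to j}$: $\Gamma_{ij}(x_i,x_j)\leftarrow\Gamma_{ij}(x_i,x_j)\sqrt{\Gamma_j(x_j)/\sum_x\Gamma_{ij}(x,x_j)}$, $\Gamma_j(x_j)\leftarrow\Gamma_j(x_j)\sqrt{\sum_x\Gamma_{ij}(x,x_j)/\Gamma_j(x_j)}$; $\mathcal P_{ij,j}$: divide $\Gamma_j$ and $\Gamma_{ij}$ each by the sum of its entries. (These are the Bregman projections w.r.t. $\sum\Gamma(\log\Gamma-1)$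 onto the sets where the row sums of $\Gamma_{ij}$ equal $\Gamma_i$, where $\Gamma_i$ and $\Gamma_{ij}$ sum to one, etc.) EMP starts from $\Gamma^{(1)}$ obtained from $\exp(-\eta C)$ by normalizing each $\Gamma_i$ and each $\Gamma_{ij}$ to sum to $1$. At iteration $k$, if $\max_{ij\in\mathcal E}\max\{\|\Gamma^{(k)}_{ij}\mathbb 1-\Gamma^{(k)}_i\|_1,\|(\Gamma^{(k)}_{ij})^\top\mathbb 1-\Gamma^{(k)}_j\|_1\}<\epsilon$ the algorithm stops and outputs the rounding $x_i=\arg\max_x\Gamma^{(k)}_i(x)$. Otherwise: EMP-cyclic applies, for each edge $ij\in\mathcal E$ in a fixed order, $\mathcal P_{ij,j}\circ\mathcal P_{ij\to j}\circ\mathcal P_{ij,i}\circ\mathcal P_{ij\to i}$, the result being $\Gamma^{(k+1)}$; EMP-greedy picks an edge $ij$ maximizing $\max\{\|\Gamma^{(k)}_{ij}\mathbb 1-\Gamma^{(k)}_i\|_1,\|(\Gamma^{(k)}_{ij})^\top\mathbb 1-\Gamma^{(k)}_j\|_1\}$ and sets $\Gamma^{(k+1)}=\mathcal P_{ij,i}\circ\mathcal P_{ij\to i}(\Gamma^{(k)})$ if $\|\Gamma^{(k)}_{ij}\mathbb 1-\Gamma^{(k)}_i\|_1>\|(\Gamma^{(k)}_{ij})^\top\mathbb 1-\Gamma^{(k)}_j\|_1$ and $\Gamma^{(k+1)}=\mathcal P_{ij,j}\circ\mathcal P_{ij\to j}(\Gamma^{(k)})$ otherwise. *)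

theory Defs
  imports Complex_Main
begin

text \<open>Marginal vectors / cost vectors: node components Gamma_i(x) and edge
components Gamma_ij(x,y), states x,y in {0..<d}.\<close>

record mvec =
  nd :: "nat \<Rightarrow> nat \<Rightarrow> real"
  ed :: "nat \<times> nat \<Rightarrow> nat \<Rightarrow> nat \<Rightarrow> real"

definition graph_ok :: "nat \<Rightarrow> (nat \<times> nat) set \<Rightarrow> bool" where
  "graph_ok n E \<longleftrightarrow> E \<subseteq> {1..n} \<times> {1..n} \<and> (\<forall>(i,j)\<in>E. i \<noteq> j \<and> (j,i) \<notin> E)
     \<and> (\<forall>v\<in>{1..n}. \<exists>e\<in>E. fst e = v \<or> snd e = v)"

definition max_deg :: "nat \<Rightarrow> (nat \<times> nat) set \<Rightarrow> nat" where
  "max_deg n E = Max (insert 0 ((\<lambda>v. card {e\<in>E. fst e = v \<or> snd e = v}) ` {1..n}))"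

definition rowsum :: "nat \<Rightarrow> mvec \<Rightarrow> nat \<times> nat \<Rightarrow> nat \<Rightarrow> real" where
  "rowsum d G e xi = (\<Sum>x<d. ed G e xi x)"

definition colsum :: "nat \<Rightarrow> mvec \<Rightarrow> nat \<times> nat \<Rightarrow> nat \<Rightarrow> real" where
  "colsum d G e xj = (\<Sum>x<d. ed G e x xj)"

definition proj_i :: "nat \<Rightarrow> nat \<times> nat \<Rightarrow> mvec \<Rightarrow> mvec" where
  "proj_i d e G = (let i = fst e in
     G\<lparr> ed := (ed G)(e := (\<lambda>xi xj. ed G e xi xj * sqrt (nd G i xi / rowsum d G e xi))),
        nd := (nd G)(i := (\<lambda>xi. nd G i xi * sqrt (rowsum d G e xi / nd G i xi))) \<rparr>)"

definition proj_j :: "nat \<Rightarrow> nat \<times> nat \<Rightarrow> mvec \<Rightarrow> mvec" where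
  "proj_j d e G = (let j = snd e in
     G\<lparr> ed := (ed G)(e := (\<lambda>xi xj. ed G e xi xj * sqrt (nd G j xj / colsum d G e xj))),
        nd := (nd G)(j := (\<lambda>xj. nd G j xj * sqrt (colsum d G e xj / nd G j xj))) \<rparr>)"

definition norm_at :: "nat \<Rightarrow> nat \<times> nat \<Rightarrow> nat \<Rightarrow> mvec \<Rightarrow> mvec" where
  "norm_at d e v G =
     G\<lparr> ed := (ed G)(e := (\<lambda>x y. ed G e x y / (\<Sum>a<d. \<Sum>b<d. ed G e a b))),
        nd := (nd G)(v := (\<lambda>x. nd G v x / (\<Sum>a<d. nd G v a))) \<rparr>"

definition viol_i :: "nat \<Rightarrow> mvec \<Rightarrow> nat \<times> nat \<Rightarrow> real" where
  "viol_i d G e = (\<Sum>x<d. \<bar>rowsum d G e x - nd G (fst e) x\<bar>)"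

definition viol_j :: "nat \<Rightarrow> mvec \<Rightarrow> nat \<times> nat \<Rightarrow> real" where
  "viol_j d G e = (\<Sum>x<d. \<bar>colsum d G e x - nd G (snd e) x\<bar>)"

definition stop_crit :: "nat \<Rightarrow> (nat \<times> nat) set \<Rightarrow> real \<Rightarrow> mvec \<Rightarrow> bool" where
  "stop_crit d E \<epsilon> G \<longleftrightarrow> (\<forall>e\<in>E. viol_i d G e < \<epsilon> \<and> viol_j d G e < \<epsilon>)"

definition emp_init :: "nat \<Rightarrow> real \<Rightarrow> mvec \<Rightarrow> mvec" where
  "emp_init d \<eta> C =
     \<lparr> nd = (\<lambda>i x. exp (- \<eta> * nd C i x) / (\<Sum>a<d. exp (- \<eta> * nd C i a))),
       ed = (\<lambda>e x y. exp (- \<eta> * ed C e x y) / (\<Sum>a<d. \<Sum>b<d. exp (- \<eta> * ed C e a b))) \<rparr>"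

definition edge_step :: "nat \<Rightarrow> nat \<times> nat \<Rightarrow> mvec \<Rightarrow> mvec" where
  "edge_step d e G =
     norm_at d e (snd e) (proj_j d e (norm_at d e (fst e) (proj_i d e G)))"

definition cyclic_step :: "nat \<Rightarrow> (nat \<times> nat) list \<Rightarrow> mvec \<Rightarrow> mvec" where
  "cyclic_step d order G = fold (edge_step d) order G"

definition greedy_update :: "nat \<Rightarrow> nat \<times> nat \<Rightarrow> mvec \<Rightarrow> mvec" where
  "greedy_update d e G =
     (if viol_i d G e > viol_j d G e then norm_at d e (fst e) (proj_i d e G)
      else norm_at d e (snd e) (proj_j d e G))"

definition viol :: "nat \<Rightarrow> mvec \<Rightarrow> nat \<times> nat \<Rightarrow> real" where
  "viol d G e = max (viol_i d G e) (viol_j d G e)"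

definition S_val :: "nat \<Rightarrow> (nat \<times> nat) set \<Rightarrow> nat \<Rightarrow> real \<Rightarrow> mvec \<Rightarrow> real" where
  "S_val n E d \<eta> C =
     (\<Sum>e\<in>E. ln (\<Sum>x<d. \<Sum>y<d. exp (- \<eta> * ed C e x y))
              + (\<Sum>x<d. \<Sum>y<d. \<eta> / (real d)^2 * ed C e x y))
   + (\<Sum>i\<in>{1..n}. ln (\<Sum>x<d. exp (- \<eta> * nd C i x)) + (\<Sum>x<d. \<eta> / real d * nd C i x))"

definition L1_term :: "nat \<Rightarrow> (nat \<times> nat) set \<Rightarrow> nat \<Rightarrow> real \<Rightarrow> mvec \<Rightarrow> real" where
  "L1_term n E d \<eta> C =
     (\<Sum>e\<in>E. \<Sum>x<d. \<Sum>y<d. \<bar>\<eta> * ed C e x y / real d + exp (- \<eta> * ed C e x y)\<bar>)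
   + (\<Sum>i\<in>{1..n}. \<Sum>x<d. \<bar>\<eta> * nd C i x / real d + exp (- \<eta> * nd C i x)\<bar>)"

definition S0 :: "nat \<Rightarrow> (nat \<times> nat) set \<Rightarrow> nat \<Rightarrow> real \<Rightarrow> mvec \<Rightarrow> real" where
  "S0 n E d \<eta> C = min (L1_term n E d \<eta> C) (S_val n E d \<eta> C)"

end

theory Submission
  imports Defs "HOL-Analysis.Convex"
begin

text \<open>
  All iterates stay strictly positive and normalised, and the potential \<open>\<Phi>\<close>, the sum of
  \<open>KL(u || \<Gamma>\<^sub>c)\<close> over all node and edge components \<open>\<Gamma>\<^sub>c\<close> with \<open>u\<close> uniform, is nonnegative
  and at most \<open>S\<^sub>0\<close> initially.  The half-step enforcing that the row sums \<open>r\<close> of \<open>\<Gamma>\<^sub>i\<^sub>j\<close>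
  equal \<open>\<Gamma>\<^sub>i\<close> replaces \<open>\<Gamma>\<^sub>i\<close> by \<open>sqrt (\<Gamma>\<^sub>i r) / Z\<close> and rescales row \<open>x\<close> of \<open>\<Gamma>\<^sub>i\<^sub>j\<close> by
  \<open>sqrt (\<Gamma>\<^sub>i x / r x) / Z\<close>, where \<open>Z = \<Sum>\<^sub>x sqrt (\<Gamma>\<^sub>i x * r x)\<close> is the Bhattacharyya
  coefficient; it lowers \<open>\<Phi>\<close> by exactly \<open>-2 ln Z\<close>.  By Cauchy-Schwarz, \<open>-8 ln Z\<close> bounds the
  squares of the violation \<open>\<Sum>\<^sub>x \<bar>r x - \<Gamma>\<^sub>i x\<bar>\<close> and of the \<open>L\<^sub>1\<close>-moves of \<open>\<Gamma>\<^sub>i\<close> and \<open>\<Gamma>\<^sub>i\<^sub>j\<close>.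
  So a greedy step lowers \<open>\<Phi>\<close> by at least \<open>\<epsilon>\<^sup>2/4\<close>.  In a cyclic pass, the violation of an
  edge at the start of the pass is at most its violation when the pass reaches it plus the moves
  of its endpoints caused by earlier incident edges; combining the square roots by
  Cauchy-Schwarz, a pass lowers \<open>\<Phi>\<close> by at least \<open>\<epsilon>\<^sup>2/(4 (deg G + 1))\<close>.
\<close>

section \<open>Real inequalities\<close>

lemma times_sqrt_div_self:
  fixes x y :: real
  assumes "0 < x" "0 \<le> y"
  shows "x * sqrt (y / x) = sqrt (x * y)"
proof -
  have "sqrt (x * y) = sqrt (x\<^sup>2 * (y / x))"
    using assms by (simp add: power2_eq_square)
  also have "\<dots> = x * sqrt (y / x)"
    unfolding real_sqrt_mult using assms by simp
  finally show ?thesis ..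
qed

lemma le_two_sqrt_of_sq_le: "0 \<le> x \<Longrightarrow> x\<^sup>2 \<le> 4 * D \<Longrightarrow> x \<le> 2 * sqrt D"
  using real_le_rsqrt[of x "4 * D"] by (simp add: real_sqrt_mult)

lemma sqrt_mult_add_le:
  fixes a b x y :: real
  assumes "0 \<le> a" "0 \<le> b" "0 \<le> x" "0 \<le> y"
  shows "sqrt (a * x) + sqrt (b * y) \<le> sqrt ((a + b) * (x + y))"
proof (rule real_le_rsqrt)
  have "sqrt ((a * y) * (b * x)) \<le> (a * y + b * x) / 2"
    using assms by (intro arith_geo_mean_sqrt) auto
  moreover have "(sqrt (a * x) + sqrt (b * y))\<^sup>2 = a * x + b * y + 2 * sqrt ((a * y) * (b * x))"
    using assms by (simp add: power2_eq_square algebra_simps real_sqrt_mult)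
  ultimately show "(sqrt (a * x) + sqrt (b * y))\<^sup>2 \<le> (a + b) * (x + y)"
    by (simp add: algebra_simps)
qed

lemma sq_le_neg_ln_of_sq_le_inv_sq:
  fixes \<delta> Z :: real
  assumes "0 \<le> \<delta>" "\<delta> \<le> 2" "\<delta>\<^sup>2 \<le> 1 / Z\<^sup>2 - 1" "0 < Z" "Z \<le> 1"
  shows "\<delta>\<^sup>2 \<le> - 8 * ln Z"
proof (cases "Z \<ge> 1/2")
  case True
  have "(1/2)\<^sup>2 \<le> Z\<^sup>2" using True by (intro power_mono) auto
  then have inv: "1 / Z\<^sup>2 \<le> 4" using assms by (simp add: field_simps)
  have "Z\<^sup>2 \<le> 1" using assms by (simp add: power_le_one)
  have "1 / Z\<^sup>2 - 1 = (1 - Z\<^sup>2) * (1 / Z\<^sup>2)"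
    using assms by (simp add: field_simps)
  also have "\<dots> \<le> (1 - Z\<^sup>2) * 4"
    using inv \<open>Z\<^sup>2 \<le> 1\<close> by (intro mult_left_mono) auto
  also have "\<dots> \<le> - ln (Z\<^sup>2) * 4"
    using ln_le_minus_one[of "Z\<^sup>2"] assms by simp
  also have "\<dots> = - 8 * ln Z"
    using assms by (simp add: ln_realpow)
  finally show ?thesis using assms(3) by linarith
next
  case False
  have "\<delta>\<^sup>2 \<le> 2\<^sup>2" using assms by (intro power_mono) auto
  moreover have "1 \<le> - 2 * ln Z"
    using ln_le_minus_one[OF assms(4)] False by simp
  ultimately show ?thesis by simp
qed

lemma ln_diff_le_diff:
  fixes x y :: real
  assumes "1 \<le> x" "x \<le> y"
  shows "ln y - ln x \<le> y - x"
proof -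
  have "ln y - ln x = ln (y / x)" using assms by (simp add: ln_div)
  also have "\<dots> \<le> y / x - 1" using assms by (intro ln_le_minus_one) simp
  also have "\<dots> = (y - x) / x" using assms by (simp add: field_simps)
  also have "\<dots> \<le> y - x" using assms by (simp add: divide_le_eq mult_le_cancel_left1)
  finally show ?thesis .
qed

lemma card_mult_exp_mean_le:
  fixes v :: "'a \<Rightarrow> real"
  assumes "finite A"
  shows "real (card A) * exp ((\<Sum>a\<in>A. v a) / real (card A)) \<le> (\<Sum>a\<in>A. exp (v a))"
proof (cases "A = {}")
  case True
  then show ?thesis by simp
next
  case False
  define N where "N = real (card A)"
  define m where "m = (\<Sum>a\<in>A. v a) / N"
  have N: "0 < N" using assms False by (simp add: N_def card_gt_0_iff)
  have "N * exp m = (\<Sum>a\<in>A. exp m * (1 + (v a - m)))"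
    using N by (simp add: sum.distrib sum_subtractf sum_distrib_left[symmetric] m_def N_def)
  also have "\<dots> \<le> (\<Sum>a\<in>A. exp m * exp (v a - m))"
    by (intro sum_mono mult_left_mono) auto
  also have "\<dots> = (\<Sum>a\<in>A. exp (v a))"
    by (simp add: exp_diff)
  finally show ?thesis by (simp add: N_def m_def)
qed

lemma Cauchy_Schwarz_abs_sum:
  fixes x y :: "'a \<Rightarrow> real"
  shows "(\<Sum>a\<in>A. \<bar>x a\<bar> * \<bar>y a\<bar>)\<^sup>2 \<le> (\<Sum>a\<in>A. (x a)\<^sup>2) * (\<Sum>a\<in>A. (y a)\<^sup>2)"
  using Cauchy_Schwarz_ineq_sum[of "\<lambda>a. \<bar>x a\<bar>" "\<lambda>a. \<bar>y a\<bar>" A] by simp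

section \<open>Probability vectors, divergence from uniform, Bhattacharyya coefficient\<close>

definition prob_vec :: "'a set \<Rightarrow> ('a \<Rightarrow> real) \<Rightarrow> bool" where
  "prob_vec A p \<longleftrightarrow> (\<forall>a\<in>A. 0 < p a) \<and> sum p A = 1"

definition kl_unif :: "'a set \<Rightarrow> ('a \<Rightarrow> real) \<Rightarrow> real" where
  "kl_unif A p = (\<Sum>a\<in>A. ln (1 / (real (card A) * p a))) / real (card A)"

definition l1_dist :: "'a set \<Rightarrow> ('a \<Rightarrow> real) \<Rightarrow> ('a \<Rightarrow> real) \<Rightarrow> real" where
  "l1_dist A p q = (\<Sum>a\<in>A. \<bar>p a - q a\<bar>)"

definition bhattacharyya :: "'a set \<Rightarrow> ('a \<Rightarrow> real) \<Rightarrow> ('a \<Rightarrow> real) \<Rightarrow> real" where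
  "bhattacharyya A p q = (\<Sum>a\<in>A. sqrt (p a * q a))"

lemma prob_vec_card_pos: "prob_vec A p \<Longrightarrow> 0 < card A"
  unfolding prob_vec_def card_gt_0_iff by (metis sum.empty sum.infinite zero_neq_one)

lemma prob_vec_normalize:
  assumes "finite A" "A \<noteq> {}" "\<And>a. a \<in> A \<Longrightarrow> 0 < h a"
  shows "prob_vec A (\<lambda>a. h a / sum h A)"
proof -
  have "0 < sum h A" using assms by (intro sum_pos)
  then show ?thesis using assms by (simp add: prob_vec_def sum_divide_distrib[symmetric])
qed

lemma l1_dist_nonneg: "0 \<le> l1_dist A p q"
  unfolding l1_dist_def by (simp add: sum_nonneg)

lemma l1_dist_commute: "l1_dist A p q = l1_dist A q p"
  unfolding l1_dist_def by (simp add: abs_minus_commute)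

lemma l1_dist_triangle: "l1_dist A p r \<le> l1_dist A p q + l1_dist A q r"
  unfolding l1_dist_def sum.distrib[symmetric] by (intro sum_mono) simp

lemma l1_dist_le_two: "prob_vec A p \<Longrightarrow> prob_vec A q \<Longrightarrow> l1_dist A p q \<le> 2"
  unfolding l1_dist_def
  by (rule order_trans[OF sum_mono[of A _ "\<lambda>a. p a + q a"]])
     (auto simp: prob_vec_def abs_le_iff less_imp_le sum.distrib)

lemma kl_unif_nonneg:
  assumes "prob_vec A p"
  shows "0 \<le> kl_unif A p"
proof -
  define N where "N = real (card A)"
  have N: "0 < N" using prob_vec_card_pos[OF assms] by (simp add: N_def)
  have "(\<Sum>a\<in>A. 1 - N * p a) \<le> (\<Sum>a\<in>A. ln (1 / (N * p a)))"
  proof (rule sum_mono)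
    fix a assume "a \<in> A"
    then have "0 < p a" using assms by (simp add: prob_vec_def)
    then show "1 - N * p a \<le> ln (1 / (N * p a))"
      using ln_le_minus_one[of "N * p a"] N by (simp add: ln_div)
  qed
  moreover have "(\<Sum>a\<in>A. 1 - N * p a) = 0"
    using assms by (simp add: N_def prob_vec_def sum_subtractf sum_distrib_left[symmetric])
  ultimately show ?thesis using N by (simp add: kl_unif_def N_def)
qed

lemma kl_unif_eq:
  assumes "prob_vec A p"
  shows "kl_unif A p = - ln (real (card A)) - (\<Sum>a\<in>A. ln (p a)) / real (card A)"
proof -
  define N where "N = real (card A)"
  have N: "0 < N" using prob_vec_card_pos[OF assms] by (simp add: N_def)
  have "(\<Sum>a\<in>A. ln (1 / (N * p a))) = (\<Sum>a\<in>A. - ln N - ln (p a))"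
    using assms N by (intro sum.cong) (auto simp: prob_vec_def ln_div ln_mult)
  also have "\<dots> = - N * ln N - (\<Sum>a\<in>A. ln (p a))"
    by (simp add: sum_subtractf N_def)
  finally show ?thesis using N by (simp add: kl_unif_def N_def[symmetric] field_simps)
qed

lemma kl_unif_diff:
  assumes "prob_vec A p" "prob_vec A q"
  shows "kl_unif A p - kl_unif A q = (\<Sum>a\<in>A. ln (q a) - ln (p a)) / real (card A)"
  using assms by (simp add: kl_unif_eq sum_subtractf diff_divide_distrib)

lemma kl_unif_softmax:
  fixes v :: "'a \<Rightarrow> real"
  assumes "finite A" "A \<noteq> {}"
  defines "Z \<equiv> \<Sum>x\<in>A. exp (v x)"
  shows "prob_vec A (\<lambda>a. exp (v a) / Z)"
    and "kl_unif A (\<lambda>a. exp (v a) / Z) = ln Z - ln (real (card A)) - (\<Sum>a\<in>A. v a) / real (card A)"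
proof -
  show p: "prob_vec A (\<lambda>a. exp (v a) / Z)"
    unfolding Z_def using assms by (intro prob_vec_normalize) auto
  have Z: "0 < Z" unfolding Z_def using assms by (intro sum_pos) auto
  have N: "0 < real (card A)" using assms by (simp add: card_gt_0_iff)
  have "(\<Sum>a\<in>A. ln (exp (v a) / Z)) = (\<Sum>a\<in>A. v a) - real (card A) * ln Z"
    using Z by (simp add: ln_div sum_subtractf)
  then show "kl_unif A (\<lambda>a. exp (v a) / Z) = ln Z - ln (real (card A)) - (\<Sum>a\<in>A. v a) / real (card A)"
    using N unfolding kl_unif_eq[OF p] by (simp add: field_simps)
qed

text \<open>The second bound allows any \<open>c \<le> card A\<close> because the \<open>L1_term\<close> part of \<open>S0\<close> scales the
  edge costs by \<open>1/d\<close> rather than by \<open>1/d\<^sup>2 = 1/card ({..<d} \<times> {..<d})\<close>.\<close>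

lemma kl_unif_softmax_le:
  fixes v :: "'a \<Rightarrow> real"
  assumes A: "finite A" "A \<noteq> {}" and c: "1 \<le> c" "c \<le> real (card A)"
  defines "Z \<equiv> \<Sum>x\<in>A. exp (v x)"
  shows "kl_unif A (\<lambda>a. exp (v a) / Z) \<le> ln Z - (\<Sum>a\<in>A. v a) / real (card A)"
    and "kl_unif A (\<lambda>a. exp (v a) / Z) \<le> Z - (\<Sum>a\<in>A. v a) / c"
proof -
  define N where "N = real (card A)"
  define V where "V = (\<Sum>a\<in>A. v a)"
  have kl: "kl_unif A (\<lambda>a. exp (v a) / Z) = ln Z - ln N - V / N"
    unfolding Z_def N_def V_def by (rule kl_unif_softmax(2)[OF A])
  have N: "1 \<le> N" using A by (simp add: N_def Suc_le_eq card_gt_0_iff)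
  have Z: "0 < Z" unfolding Z_def using A by (intro sum_pos) auto
  show "kl_unif A (\<lambda>a. exp (v a) / Z) \<le> ln Z - (\<Sum>a\<in>A. v a) / real (card A)"
    using N by (simp add: kl N_def V_def)
  show "kl_unif A (\<lambda>a. exp (v a) / Z) \<le> Z - (\<Sum>a\<in>A. v a) / c"
  proof (cases "V \<le> 0")
    case True
    have "V / c \<le> V / N"
      using True c by (intro divide_left_mono_neg) (auto simp: N_def)
    moreover have "ln Z \<le> Z" using ln_le_minus_one[OF Z] by simp
    moreover have "0 \<le> ln N" using N by simp
    ultimately show ?thesis unfolding kl V_def[symmetric] by linarith
  next
    case False
    define W where "W = N * exp (V / N)"
    have "N + V \<le> W"
      using N exp_ge_add_one_self[of "V / N"] by (simp add: W_def field_simps)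
    moreover have "V / c \<le> V"
      using False c by (simp add: divide_le_eq mult_le_cancel_left1)
    ultimately have W: "1 \<le> W" "V / c \<le> W"
      using False N by linarith+
    have "W \<le> Z"
      unfolding W_def N_def V_def Z_def by (rule card_mult_exp_mean_le[OF A(1)])
    have "ln W = ln N + V / N" using N by (simp add: W_def ln_mult)
    then have "kl_unif A (\<lambda>a. exp (v a) / Z) = ln Z - ln W" by (simp add: kl)
    also have "\<dots> \<le> Z - W" using W(1) \<open>W \<le> Z\<close> by (rule ln_diff_le_diff)
    also have "\<dots> \<le> Z - V / c" using W(2) by simp
    finally show ?thesis by (simp add: V_def)
  qed
qed

lemma bhattacharyya_commute: "bhattacharyya A p q = bhattacharyya A q p"
  unfolding bhattacharyya_def by (simp add: mult.commute)

lemma bhattacharyya_pos: "prob_vec A p \<Longrightarrow> prob_vec A q \<Longrightarrow> 0 < bhattacharyya A p q"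
  using prob_vec_card_pos[of A p] unfolding bhattacharyya_def
  by (intro sum_pos) (auto simp: prob_vec_def card_gt_0_iff)

lemma bhattacharyya_le_one:
  assumes "prob_vec A p" "prob_vec A q"
  shows "bhattacharyya A p q \<le> 1"
proof -
  have "bhattacharyya A p q \<le> (\<Sum>a\<in>A. (p a + q a) / 2)"
    unfolding bhattacharyya_def using assms
    by (intro sum_mono arith_geo_mean_sqrt) (auto simp: prob_vec_def less_imp_le)
  also have "\<dots> = 1"
    using assms by (simp add: prob_vec_def sum_divide_distrib[symmetric] sum.distrib)
  finally show ?thesis .
qed

lemma sum_sqrt_combination_sq:
  assumes "prob_vec A p" "prob_vec A q"
  shows "(\<Sum>a\<in>A. (u * sqrt (p a) + w * sqrt (q a))\<^sup>2) = u\<^sup>2 + w\<^sup>2 + 2 * u * w * bhattacharyya A p q"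
proof -
  have "(\<Sum>a\<in>A. (u * sqrt (p a) + w * sqrt (q a))\<^sup>2)
      = (\<Sum>a\<in>A. u\<^sup>2 * p a + w\<^sup>2 * q a + 2 * u * w * sqrt (p a * q a))"
    using assms by (intro sum.cong)
      (auto simp: prob_vec_def power2_eq_square algebra_simps real_sqrt_mult less_imp_le)
  then show ?thesis
    using assms by (simp add: prob_vec_def bhattacharyya_def sum.distrib sum_distrib_left[symmetric])
qed

lemma l1_dist_sq_le_bhattacharyya:
  assumes p: "prob_vec A p" and q: "prob_vec A q"
  shows "(l1_dist A p q)\<^sup>2 \<le> - 8 * ln (bhattacharyya A p q)"
proof -
  define Z where "Z = bhattacharyya A p q"
  have Z: "0 < Z" "Z \<le> 1" using bhattacharyya_pos[OF p q] bhattacharyya_le_one[OF p q] by (simp_all add: Z_def)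
  have "p a - q a = (sqrt (p a) - sqrt (q a)) * (sqrt (p a) + sqrt (q a))" if "a \<in> A" for a
    using p q that by (simp add: prob_vec_def algebra_simps less_imp_le flip: power2_eq_square)
  then have "l1_dist A p q = (\<Sum>a\<in>A. \<bar>sqrt (p a) - sqrt (q a)\<bar> * \<bar>sqrt (p a) + sqrt (q a)\<bar>)"
    unfolding l1_dist_def by (intro sum.cong) (auto simp: abs_mult[symmetric])
  then have "(l1_dist A p q)\<^sup>2
      \<le> (\<Sum>a\<in>A. (sqrt (p a) - sqrt (q a))\<^sup>2) * (\<Sum>a\<in>A. (sqrt (p a) + sqrt (q a))\<^sup>2)"
    using Cauchy_Schwarz_abs_sum by simp
  also have "\<dots> = (2 - 2 * Z) * (2 + 2 * Z)"
    using sum_sqrt_combination_sq[OF p q, of 1 "-1"] sum_sqrt_combination_sq[OF p q, of 1 1]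
    by (simp add: Z_def)
  also have "\<dots> \<le> (2 - 2 * Z) * 4"
    using Z by (intro mult_left_mono) auto
  also have "\<dots> \<le> - 8 * ln Z"
    using ln_le_minus_one[OF Z(1)] by simp
  finally show ?thesis by (simp add: Z_def)
qed

lemma l1_dist_geomean_sq_le_bhattacharyya:
  assumes p: "prob_vec A p" and q: "prob_vec A q"
  shows "(l1_dist A (\<lambda>a. sqrt (p a * q a) / bhattacharyya A p q) p)\<^sup>2 \<le> - 8 * ln (bhattacharyya A p q)"
proof -
  define Z where "Z = bhattacharyya A p q"
  have Z: "0 < Z" "Z \<le> 1" using bhattacharyya_pos[OF p q] bhattacharyya_le_one[OF p q] by (simp_all add: Z_def)
  have m: "prob_vec A (\<lambda>a. sqrt (p a * q a) / Z)"
    unfolding Z_def bhattacharyya_def using p q prob_vec_card_pos[OF p]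
    by (intro prob_vec_normalize) (auto simp: prob_vec_def card_gt_0_iff)
  have "sqrt (p a * q a) / Z - p a = sqrt (p a) * (1 / Z * sqrt (q a) + (-1) * sqrt (p a))"
    if "a \<in> A" for a
    using p that by (simp add: prob_vec_def algebra_simps real_sqrt_mult less_imp_le
        flip: power2_eq_square)
  then have "l1_dist A (\<lambda>a. sqrt (p a * q a) / Z) p
      = (\<Sum>a\<in>A. \<bar>sqrt (p a)\<bar> * \<bar>1 / Z * sqrt (q a) + (-1) * sqrt (p a)\<bar>)"
    unfolding l1_dist_def by (intro sum.cong) (auto simp: abs_mult[symmetric])
  then have "(l1_dist A (\<lambda>a. sqrt (p a * q a) / Z) p)\<^sup>2
      \<le> (\<Sum>a\<in>A. (sqrt (p a))\<^sup>2) * (\<Sum>a\<in>A. (1 / Z * sqrt (q a) + (-1) * sqrt (p a))\<^sup>2)"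
    using Cauchy_Schwarz_abs_sum by simp
  also have "\<dots> = 1 / Z\<^sup>2 - 1"
    using sum_sqrt_combination_sq[OF q p, of "1 / Z" "-1"] p Z
    by (simp add: bhattacharyya_commute Z_def prob_vec_def less_imp_le power_divide)
  finally show ?thesis
    using sq_le_neg_ln_of_sq_le_inv_sq[OF l1_dist_nonneg l1_dist_le_two[OF m p] _ Z]
    by (simp add: Z_def)
qed

section \<open>Projection of a joint distribution onto a marginal\<close>

definition row_marg :: "'b set \<Rightarrow> ('a \<Rightarrow> 'b \<Rightarrow> real) \<Rightarrow> 'a \<Rightarrow> real" where
  "row_marg B P a = (\<Sum>b\<in>B. P a b)"

definition proj_marg :: "'a set \<Rightarrow> 'b set \<Rightarrow> ('a \<Rightarrow> 'b \<Rightarrow> real) \<Rightarrow> ('a \<Rightarrow> real) \<Rightarrow> 'a \<Rightarrow> real" where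
  "proj_marg A B P g a =
     g a * sqrt (row_marg B P a / g a) / (\<Sum>x\<in>A. g x * sqrt (row_marg B P x / g x))"

definition proj_joint ::
    "'a set \<Rightarrow> 'b set \<Rightarrow> ('a \<Rightarrow> 'b \<Rightarrow> real) \<Rightarrow> ('a \<Rightarrow> real) \<Rightarrow> 'a \<Rightarrow> 'b \<Rightarrow> real" where
  "proj_joint A B P g a b =
     P a b * sqrt (g a / row_marg B P a) / (\<Sum>x\<in>A. \<Sum>y\<in>B. P x y * sqrt (g x / row_marg B P x))"

lemma prob_vec_product_factors:
  assumes "prob_vec (A \<times> B) (case_prod P)"
  shows "finite A" "A \<noteq> {}" "finite B" "B \<noteq> {}"
proof -
  have "finite (A \<times> B)" "A \<times> B \<noteq> {}"
    using prob_vec_card_pos[OF assms] by (simp_all add: card_gt_0_iff)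
  then show "finite A" "A \<noteq> {}" "finite B" "B \<noteq> {}"
    by (auto dest: finite_cartesian_productD1 finite_cartesian_productD2)
qed

lemma row_marg_prob_vec:
  assumes "prob_vec (A \<times> B) (case_prod P)"
  shows "prob_vec A (row_marg B P)"
  unfolding prob_vec_def
proof
  show "\<forall>a\<in>A. 0 < row_marg B P a"
    using assms prob_vec_product_factors[OF assms]
    by (auto simp: prob_vec_def row_marg_def intro!: sum_pos)
  show "sum (row_marg B P) A = 1"
    using assms by (simp add: prob_vec_def row_marg_def sum.cartesian_product)
qed

lemma l1_dist_row_marg_le:
  "l1_dist A (row_marg B P) (row_marg B Q) \<le> l1_dist (A \<times> B) (case_prod P) (case_prod Q)"
  unfolding l1_dist_def row_marg_def sum.cartesian_product'
  by (intro sum_mono) (simp add: sum_subtractf[symmetric])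

context
  fixes A :: "'a set" and B :: "'b set" and P :: "'a \<Rightarrow> 'b \<Rightarrow> real" and g :: "'a \<Rightarrow> real"
  assumes g: "prob_vec A g" and P: "prob_vec (A \<times> B) (case_prod P)"
begin

private lemma row_marg_prob: "prob_vec A (row_marg B P)"
  using P by (rule row_marg_prob_vec)

private lemma positive: "a \<in> A \<Longrightarrow> 0 < g a" "a \<in> A \<Longrightarrow> 0 < row_marg B P a"
  using g row_marg_prob by (auto simp: prob_vec_def)

lemma proj_marg_eq:
  "a \<in> A \<Longrightarrow> proj_marg A B P g a = sqrt (g a * row_marg B P a) / bhattacharyya A g (row_marg B P)"
  unfolding proj_marg_def bhattacharyya_def using positive
  by (simp add: times_sqrt_div_self less_imp_le cong: sum.cong)

lemma proj_joint_eq: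
  "proj_joint A B P g a b = P a b * sqrt (g a / row_marg B P a) / bhattacharyya A g (row_marg B P)"
proof -
  have "(\<Sum>x\<in>A. \<Sum>y\<in>B. P x y * sqrt (g x / row_marg B P x))
      = (\<Sum>x\<in>A. row_marg B P x * sqrt (g x / row_marg B P x))"
    by (simp add: row_marg_def sum_distrib_right)
  also have "\<dots> = bhattacharyya A g (row_marg B P)"
    unfolding bhattacharyya_def using positive
    by (intro sum.cong) (simp_all add: times_sqrt_div_self less_imp_le mult.commute)
  finally show ?thesis by (simp add: proj_joint_def)
qed

lemma proj_marg_prob_vec: "prob_vec A (proj_marg A B P g)"
proof -
  have "prob_vec A (\<lambda>a. g a * sqrt (row_marg B P a / g a)
      / (\<Sum>x\<in>A. g x * sqrt (row_marg B P x / g x)))"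
    using prob_vec_product_factors[OF P] positive by (intro prob_vec_normalize) auto
  then show ?thesis by (simp add: proj_marg_def[abs_def])
qed

lemma proj_joint_prob_vec: "prob_vec (A \<times> B) (case_prod (proj_joint A B P g))"
proof -
  define h where "h = (\<lambda>(a, b). P a b * sqrt (g a / row_marg B P a))"
  have "case_prod (proj_joint A B P g) = (\<lambda>x. h x / sum h (A \<times> B))"
    by (simp add: fun_eq_iff proj_joint_def h_def sum.cartesian_product')
  moreover have "prob_vec (A \<times> B) (\<lambda>x. h x / sum h (A \<times> B))"
    using prob_vec_product_factors[OF P] positive P
    by (intro prob_vec_normalize) (auto simp: h_def prob_vec_def)
  ultimately show ?thesis by simp
qed

lemma ln_proj_joint:
  assumes "a \<in> A" "b \<in> B"
  shows "ln (proj_joint A B P g a b)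
    = ln (P a b) + (ln (g a) - ln (row_marg B P a)) / 2 - ln (bhattacharyya A g (row_marg B P))"
proof -
  have "0 < P a b" using P assms by (auto simp: prob_vec_def)
  then show ?thesis
    using positive[OF assms(1)] bhattacharyya_pos[OF g row_marg_prob] unfolding proj_joint_eq
    by (simp add: ln_div ln_mult ln_sqrt)
qed

lemma ln_proj_marg:
  assumes "a \<in> A"
  shows "ln (proj_marg A B P g a)
    = (ln (g a) + ln (row_marg B P a)) / 2 - ln (bhattacharyya A g (row_marg B P))"
  using positive[OF assms] bhattacharyya_pos[OF g row_marg_prob] unfolding proj_marg_eq[OF assms]
  by (simp add: ln_div ln_mult ln_sqrt)

lemma kl_unif_proj_decrease:
  "kl_unif (A \<times> B) (case_prod P) + kl_unif A g
     - kl_unif (A \<times> B) (case_prod (proj_joint A B P g)) - kl_unif A (proj_marg A B P g)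
   = - 2 * ln (bhattacharyya A g (row_marg B P))"
proof -
  define r where "r = row_marg B P"
  define Z where "Z = bhattacharyya A g r"
  define NA where "NA = real (card A)"
  define NB where "NB = real (card B)"
  have N: "0 < NA" "0 < NB"
    using prob_vec_product_factors[OF P] by (simp_all add: NA_def NB_def card_gt_0_iff)
  have "kl_unif (A \<times> B) (case_prod P) - kl_unif (A \<times> B) (case_prod (proj_joint A B P g))
      = (\<Sum>a\<in>A. NB * ((ln (g a) - ln (r a)) / 2 - ln Z)) / (NA * NB)"
    unfolding kl_unif_diff[OF P proj_joint_prob_vec] sum.cartesian_product' card_cartesian_product
    by (simp add: ln_proj_joint r_def Z_def NA_def NB_def cong: sum.cong)
  also have "\<dots> = (\<Sum>a\<in>A. (ln (g a) - ln (r a)) / 2 - ln Z) / NA"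
    using N by (simp add: sum_distrib_left[symmetric])
  finally have joint: "kl_unif (A \<times> B) (case_prod P) - kl_unif (A \<times> B) (case_prod (proj_joint A B P g))
      = (\<Sum>a\<in>A. (ln (g a) - ln (r a)) / 2 - ln Z) / NA" .
  have marg: "kl_unif A g - kl_unif A (proj_marg A B P g)
      = (\<Sum>a\<in>A. (ln (r a) - ln (g a)) / 2 - ln Z) / NA"
    unfolding kl_unif_diff[OF g proj_marg_prob_vec] NA_def
    by (intro arg_cong2[where f = "(/)"] sum.cong refl) (simp add: ln_proj_marg r_def Z_def field_simps)
  have "kl_unif (A \<times> B) (case_prod P) + kl_unif A g
      - kl_unif (A \<times> B) (case_prod (proj_joint A B P g)) - kl_unif A (proj_marg A B P g)
      = ((\<Sum>a\<in>A. (ln (g a) - ln (r a)) / 2 - ln Z) + (\<Sum>a\<in>A. (ln (r a) - ln (g a)) / 2 - ln Z)) / NA"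
    using joint marg by (simp add: add_divide_distrib)
  also have "\<dots> = (\<Sum>a\<in>A. - 2 * ln Z) / NA"
    unfolding sum.distrib[symmetric] by (intro arg_cong2[where f = "(/)"] sum.cong) (simp_all add: field_simps)
  also have "\<dots> = - 2 * ln Z"
    using N by (simp add: NA_def)
  finally show ?thesis by (simp add: Z_def r_def)
qed

lemma l1_dist_proj_joint:
  "l1_dist (A \<times> B) (case_prod (proj_joint A B P g)) (case_prod P)
   = l1_dist A (\<lambda>a. sqrt (row_marg B P a * g a) / bhattacharyya A (row_marg B P) g) (row_marg B P)"
proof -
  define r where "r = row_marg B P"
  define Z where "Z = bhattacharyya A r g"
  have scale: "\<bar>x * y / z - x\<bar> = x * \<bar>y / z - 1\<bar>" if "0 \<le> x" for x y z :: real
  proof -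
    have "\<bar>x * y / z - x\<bar> = \<bar>x\<bar> * \<bar>y / z - 1\<bar>"
      by (simp add: abs_mult[symmetric] algebra_simps)
    then show ?thesis using that by simp
  qed
  have "l1_dist (A \<times> B) (case_prod (proj_joint A B P g)) (case_prod P)
      = (\<Sum>a\<in>A. \<Sum>b\<in>B. P a b * \<bar>sqrt (g a / r a) / Z - 1\<bar>)"
    unfolding l1_dist_def sum.cartesian_product' proj_joint_eq
    using P by (intro sum.cong refl)
      (auto simp: prob_vec_def bhattacharyya_commute r_def Z_def scale less_imp_le)
  also have "\<dots> = (\<Sum>a\<in>A. \<bar>r a * sqrt (g a / r a) / Z - r a\<bar>)"
  proof (intro sum.cong refl)
    fix a assume "a \<in> A"
    have "(\<Sum>b\<in>B. P a b * \<bar>sqrt (g a / r a) / Z - 1\<bar>) = r a * \<bar>sqrt (g a / r a) / Z - 1\<bar>"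
      unfolding r_def row_marg_def by (rule sum_distrib_right[symmetric])
    also have "\<dots> = \<bar>r a * sqrt (g a / r a) / Z - r a\<bar>"
      using scale[of "r a"] positive(2)[OF \<open>a \<in> A\<close>] by (simp add: r_def)
    finally show "(\<Sum>b\<in>B. P a b * \<bar>sqrt (g a / r a) / Z - 1\<bar>) = \<bar>r a * sqrt (g a / r a) / Z - r a\<bar>" .
  qed
  also have "\<dots> = l1_dist A (\<lambda>a. sqrt (r a * g a) / Z) r"
    unfolding l1_dist_def using positive
    by (intro sum.cong refl) (simp add: r_def times_sqrt_div_self less_imp_le)
  finally show ?thesis by (simp add: r_def Z_def)
qed

lemma proj_bounds:
  defines "\<Delta> \<equiv> kl_unif (A \<times> B) (case_prod P) + kl_unif A g
     - kl_unif (A \<times> B) (case_prod (proj_joint A B P g)) - kl_unif A (proj_marg A B P g)"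
  shows "0 \<le> \<Delta>"
    and "(l1_dist A (row_marg B P) g)\<^sup>2 \<le> 4 * \<Delta>"
    and "(l1_dist A (proj_marg A B P g) g)\<^sup>2 \<le> 4 * \<Delta>"
    and "(l1_dist (A \<times> B) (case_prod (proj_joint A B P g)) (case_prod P))\<^sup>2 \<le> 4 * \<Delta>"
proof -
  have \<Delta>: "4 * \<Delta> = - 8 * ln (bhattacharyya A (row_marg B P) g)"
    unfolding \<Delta>_def kl_unif_proj_decrease by (simp add: bhattacharyya_commute)
  show "0 \<le> \<Delta>"
    using \<Delta> bhattacharyya_pos[OF row_marg_prob g] bhattacharyya_le_one[OF row_marg_prob g] by simp
  show "(l1_dist A (row_marg B P) g)\<^sup>2 \<le> 4 * \<Delta>"
    unfolding \<Delta> by (rule l1_dist_sq_le_bhattacharyya[OF row_marg_prob g])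
  have "l1_dist A (proj_marg A B P g) g
      = l1_dist A (\<lambda>a. sqrt (g a * row_marg B P a) / bhattacharyya A g (row_marg B P)) g"
    unfolding l1_dist_def by (simp add: proj_marg_eq)
  then show "(l1_dist A (proj_marg A B P g) g)\<^sup>2 \<le> 4 * \<Delta>"
    using l1_dist_geomean_sq_le_bhattacharyya[OF g row_marg_prob] unfolding \<Delta> by (simp add: bhattacharyya_commute)
  show "(l1_dist (A \<times> B) (case_prod (proj_joint A B P g)) (case_prod P))\<^sup>2 \<le> 4 * \<Delta>"
    unfolding \<Delta> l1_dist_proj_joint by (rule l1_dist_geomean_sq_le_bhattacharyya[OF row_marg_prob g])
qed

end

lemma sum_product_swap: "sum f (B \<times> A) = (\<Sum>(a, b)\<in>A \<times> B. f (b, a))"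
  by (simp add: sum.cartesian_product') (rule sum.swap)

lemma prob_vec_transpose:
  "prob_vec (B \<times> A) (\<lambda>(b, a). P a b) \<longleftrightarrow> prob_vec (A \<times> B) (case_prod P)"
  unfolding prob_vec_def by (subst sum_product_swap) (auto simp: case_prod_beta)

lemma kl_unif_transpose:
  "kl_unif (B \<times> A) (\<lambda>(b, a). P a b) = kl_unif (A \<times> B) (case_prod P)"
  unfolding kl_unif_def
  by (subst sum_product_swap) (simp add: card_cartesian_product mult.commute case_prod_beta)

lemma l1_dist_transpose:
  "l1_dist (B \<times> A) (\<lambda>(b, a). P a b) (\<lambda>(b, a). Q a b) = l1_dist (A \<times> B) (case_prod P) (case_prod Q)"
  unfolding l1_dist_def by (subst sum_product_swap) (simp add: case_prod_beta)

section \<open>Marginal vectors\<close>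

definition prob_mvec :: "nat \<Rightarrow> mvec \<Rightarrow> bool" where
  "prob_mvec d G \<longleftrightarrow>
     (\<forall>i. prob_vec {..<d} (nd G i)) \<and> (\<forall>e. prob_vec ({..<d} \<times> {..<d}) (case_prod (ed G e)))"

definition kl_potential :: "nat \<Rightarrow> (nat \<times> nat) set \<Rightarrow> nat \<Rightarrow> mvec \<Rightarrow> real" where
  "kl_potential n E d G =
     (\<Sum>e\<in>E. kl_unif ({..<d} \<times> {..<d}) (case_prod (ed G e))) + (\<Sum>i\<in>{1..n}. kl_unif {..<d} (nd G i))"

definition incident :: "nat \<Rightarrow> nat \<times> nat \<Rightarrow> bool" where
  "incident v e \<longleftrightarrow> fst e = v \<or> snd e = v"

lemma graph_ok_finite: "graph_ok n E \<Longrightarrow> finite E"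
  unfolding graph_ok_def by (meson finite_SigmaI finite_atLeastAtMost finite_subset)

lemma graph_ok_edgeD:
  assumes "graph_ok n E" "e \<in> E"
  shows "fst e \<in> {1..n}" "snd e \<in> {1..n}" "fst e \<noteq> snd e"
  using assms unfolding graph_ok_def by auto

lemma card_incident_le_max_deg:
  "finite E \<Longrightarrow> v \<in> {1..n} \<Longrightarrow> card {f \<in> E. incident v f} \<le> max_deg n E"
  unfolding max_deg_def incident_def by (intro Max_ge) auto

lemma viol_i_eq_l1_dist: "viol_i d G e = l1_dist {..<d} (row_marg {..<d} (ed G e)) (nd G (fst e))"
  by (simp add: viol_i_def l1_dist_def rowsum_def row_marg_def)

lemma viol_j_eq_l1_dist:
  "viol_j d G e = l1_dist {..<d} (row_marg {..<d} (\<lambda>b a. ed G e a b)) (nd G (snd e))"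
  by (simp add: viol_j_def l1_dist_def colsum_def row_marg_def)

lemma viol_nonneg: "0 \<le> viol d G e"
  by (simp add: viol_def viol_i_eq_l1_dist l1_dist_nonneg le_max_iff_disj)

lemma not_stop_crit_viol: "\<not> stop_crit d E \<epsilon> G \<Longrightarrow> \<exists>e\<in>E. \<epsilon> \<le> viol d G e"
  by (auto simp: stop_crit_def viol_def not_less le_max_iff_disj)

lemma stop_crit_zero_dim: "0 < \<epsilon> \<Longrightarrow> stop_crit 0 E \<epsilon> G"
  by (simp add: stop_crit_def viol_i_def viol_j_def)

lemma sum_fun_upd:
  assumes "finite A" "x \<in> A"
  shows "(\<Sum>y\<in>A. h ((f(x := v)) y)) = (\<Sum>y\<in>A. h (f y)) - h (f x) + (h v :: real)"
proof -
  have "(\<Sum>y\<in>A. h ((f(x := v)) y)) = h v + (\<Sum>y\<in>A - {x}. h ((f(x := v)) y))"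
    using assms by (simp add: sum.remove)
  also have "(\<Sum>y\<in>A - {x}. h ((f(x := v)) y)) = (\<Sum>y\<in>A - {x}. h (f y))"
    by (intro sum.cong) auto
  also have "\<dots> = (\<Sum>y\<in>A. h (f y)) - h (f x)"
    using assms by (simp add: sum_diff1)
  finally show ?thesis by simp
qed

lemma kl_potential_update:
  assumes "finite E" "e \<in> E" "v \<in> {1..n}"
  shows "kl_potential n E d (G\<lparr>ed := (ed G)(e := P), nd := (nd G)(v := g)\<rparr>)
       = kl_potential n E d G
         - kl_unif ({..<d} \<times> {..<d}) (case_prod (ed G e)) + kl_unif ({..<d} \<times> {..<d}) (case_prod P)
         - kl_unif {..<d} (nd G v) + kl_unif {..<d} g"
  unfolding kl_potential_def
  using sum_fun_upd[OF assms(1,2), of "\<lambda>P. kl_unif ({..<d} \<times> {..<d}) (case_prod P)" "ed G" P]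
    sum_fun_upd[of "{1..n}" v "kl_unif {..<d}" "nd G" g] assms
  by simp

lemma kl_potential_nonneg: "prob_mvec d G \<Longrightarrow> 0 \<le> kl_potential n E d G"
  unfolding kl_potential_def prob_mvec_def
  by (intro add_nonneg_nonneg sum_nonneg kl_unif_nonneg) auto

lemma half_step_i_eq:
  "norm_at d e (fst e) (proj_i d e G) =
     G\<lparr>ed := (ed G)(e := proj_joint {..<d} {..<d} (ed G e) (nd G (fst e))),
       nd := (nd G)(fst e := proj_marg {..<d} {..<d} (ed G e) (nd G (fst e)))\<rparr>"
  by (simp add: norm_at_def proj_i_def Let_def proj_joint_def[abs_def] proj_marg_def[abs_def]
      rowsum_def row_marg_def)

lemma half_step_j_eq:
  "norm_at d e (snd e) (proj_j d e G) =
     G\<lparr>ed := (ed G)(e := (\<lambda>a b. proj_joint {..<d} {..<d} (\<lambda>b a. ed G e a b) (nd G (snd e)) b a)),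
       nd := (nd G)(snd e := proj_marg {..<d} {..<d} (\<lambda>b a. ed G e a b) (nd G (snd e)))\<rparr>"
proof -
  have "(\<Sum>a<d. \<Sum>b<d. ed G e a b * sqrt (nd G (snd e) b / colsum d G e b))
      = (\<Sum>b<d. \<Sum>a<d. ed G e a b * sqrt (nd G (snd e) b / colsum d G e b))"
    by (rule sum.swap)
  then show ?thesis
    by (simp add: norm_at_def proj_j_def Let_def proj_joint_def[abs_def] proj_marg_def[abs_def]
        colsum_def row_marg_def)
qed

lemma half_step_frame:
  "i \<noteq> fst e \<Longrightarrow> nd (norm_at d e (fst e) (proj_i d e G)) i = nd G i"
  "e' \<noteq> e \<Longrightarrow> ed (norm_at d e (fst e) (proj_i d e G)) e' = ed G e'"
  "i \<noteq> snd e \<Longrightarrow> nd (norm_at d e (snd e) (proj_j d e G)) i = nd G i"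
  "e' \<noteq> e \<Longrightarrow> ed (norm_at d e (snd e) (proj_j d e G)) e' = ed G e'"
  by (simp_all add: norm_at_def proj_i_def proj_j_def Let_def)

lemma half_step_i_bounds:
  assumes G: "prob_mvec d G" and E: "graph_ok n E" and e: "e \<in> E"
  defines "G' \<equiv> norm_at d e (fst e) (proj_i d e G)"
  shows "prob_mvec d G'" and "kl_potential n E d G' \<le> kl_potential n E d G"
    and "(viol_i d G e)\<^sup>2 \<le> 4 * (kl_potential n E d G - kl_potential n E d G')"
    and "(l1_dist {..<d} (nd G' (fst e)) (nd G (fst e)))\<^sup>2
      \<le> 4 * (kl_potential n E d G - kl_potential n E d G')"
    and "(l1_dist ({..<d} \<times> {..<d}) (case_prod (ed G' e)) (case_prod (ed G e)))\<^sup>2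
      \<le> 4 * (kl_potential n E d G - kl_potential n E d G')"
proof -
  define \<Delta> where "\<Delta> = kl_potential n E d G - kl_potential n E d G'"
  have g: "prob_vec {..<d} (nd G (fst e))" and P: "prob_vec ({..<d} \<times> {..<d}) (case_prod (ed G e))"
    using G unfolding prob_mvec_def by blast+
  note G' = G'_def[unfolded half_step_i_eq]
  have "\<Delta> = kl_unif ({..<d} \<times> {..<d}) (case_prod (ed G e)) + kl_unif {..<d} (nd G (fst e))
      - kl_unif ({..<d} \<times> {..<d}) (case_prod (proj_joint {..<d} {..<d} (ed G e) (nd G (fst e))))
      - kl_unif {..<d} (proj_marg {..<d} {..<d} (ed G e) (nd G (fst e)))"
    unfolding \<Delta>_def G' kl_potential_update[OF graph_ok_finite[OF E] e graph_ok_edgeD(1)[OF E e]]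
    by simp
  note bounds = proj_bounds[OF g P, folded this]
  show "prob_mvec d G'"
    using G proj_marg_prob_vec[OF g P] proj_joint_prob_vec[OF g P] by (auto simp: G' prob_mvec_def)
  show "kl_potential n E d G' \<le> kl_potential n E d G" using bounds(1) by (simp add: \<Delta>_def)
  show "(viol_i d G e)\<^sup>2 \<le> 4 * (kl_potential n E d G - kl_potential n E d G')"
    unfolding viol_i_eq_l1_dist \<Delta>_def[symmetric] by (rule bounds(2))
  show "(l1_dist {..<d} (nd G' (fst e)) (nd G (fst e)))\<^sup>2 \<le> 4 * (kl_potential n E d G - kl_potential n E d G')"
    using bounds(3) by (simp add: G' \<Delta>_def)
  show "(l1_dist ({..<d} \<times> {..<d}) (case_prod (ed G' e)) (case_prod (ed G e)))\<^sup>2 \<le> 4 * (kl_potential n E d G - kl_potential n E d G')"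
    using bounds(4) by (simp add: G' \<Delta>_def)
qed

lemma half_step_j_bounds:
  assumes G: "prob_mvec d G" and E: "graph_ok n E" and e: "e \<in> E"
  defines "G' \<equiv> norm_at d e (snd e) (proj_j d e G)"
  shows "prob_mvec d G'" and "kl_potential n E d G' \<le> kl_potential n E d G"
    and "(viol_j d G e)\<^sup>2 \<le> 4 * (kl_potential n E d G - kl_potential n E d G')"
    and "(l1_dist {..<d} (nd G' (snd e)) (nd G (snd e)))\<^sup>2
      \<le> 4 * (kl_potential n E d G - kl_potential n E d G')"
    and "(l1_dist ({..<d} \<times> {..<d}) (case_prod (ed G' e)) (case_prod (ed G e)))\<^sup>2
      \<le> 4 * (kl_potential n E d G - kl_potential n E d G')"
proof -
  define \<Delta> where "\<Delta> = kl_potential n E d G - kl_potential n E d G'"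
  define P where "P = (\<lambda>b a. ed G e a b)"
  define P' where "P' = proj_joint {..<d} {..<d} P (nd G (snd e))"
  have g: "prob_vec {..<d} (nd G (snd e))" and P: "prob_vec ({..<d} \<times> {..<d}) (case_prod P)"
    using G unfolding prob_mvec_def P_def by (blast intro: prob_vec_transpose[THEN iffD2])+
  have ed_G: "case_prod (ed G e) = (\<lambda>(a, b). P b a)"
    by (simp add: P_def)
  note G' = G'_def[unfolded half_step_j_eq, folded P_def, folded P'_def]
  have "\<Delta> = kl_unif ({..<d} \<times> {..<d}) (case_prod P) + kl_unif {..<d} (nd G (snd e))
      - kl_unif ({..<d} \<times> {..<d}) (case_prod P') - kl_unif {..<d} (proj_marg {..<d} {..<d} P (nd G (snd e)))"
    unfolding \<Delta>_def G' kl_potential_update[OF graph_ok_finite[OF E] e graph_ok_edgeD(2)[OF E e]]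
      ed_G kl_unif_transpose[where P = P] kl_unif_transpose[where P = P'] by simp
  note bounds = proj_bounds[OF g P, folded P'_def, folded this]
  show "prob_mvec d G'"
    using G proj_marg_prob_vec[OF g P] prob_vec_transpose[where P = P']
      proj_joint_prob_vec[OF g P, folded P'_def]
    by (auto simp: G' prob_mvec_def)
  show "kl_potential n E d G' \<le> kl_potential n E d G"
    using bounds(1) by (simp add: \<Delta>_def)
  show "(viol_j d G e)\<^sup>2 \<le> 4 * (kl_potential n E d G - kl_potential n E d G')"
    unfolding viol_j_eq_l1_dist P_def[symmetric] \<Delta>_def[symmetric] by (rule bounds(2))
  show "(l1_dist {..<d} (nd G' (snd e)) (nd G (snd e)))\<^sup>2
      \<le> 4 * (kl_potential n E d G - kl_potential n E d G')"
    using bounds(3) by (simp add: G' \<Delta>_def)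
  have "l1_dist ({..<d} \<times> {..<d}) (case_prod (ed G' e)) (case_prod (ed G e))
      = l1_dist ({..<d} \<times> {..<d}) (case_prod P') (case_prod P)"
    unfolding ed_G by (simp add: G' l1_dist_transpose[where P = P' and Q = P])
  then show "(l1_dist ({..<d} \<times> {..<d}) (case_prod (ed G' e)) (case_prod (ed G e)))\<^sup>2
      \<le> 4 * (kl_potential n E d G - kl_potential n E d G')"
    using bounds(4) by (simp add: \<Delta>_def)
qed

section \<open>Edge steps, cyclic passes and greedy updates\<close>

lemma edge_step_frame:
  "e \<noteq> f \<Longrightarrow> ed (edge_step d f G) e = ed G e"
  "\<not> incident v f \<Longrightarrow> nd (edge_step d f G) v = nd G v"
  by (simp_all add: edge_step_def half_step_frame incident_def)

lemma edge_step_bounds: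
  assumes G: "prob_mvec d G" and E: "graph_ok n E" and f: "f \<in> E"
  defines "\<Delta> \<equiv> kl_potential n E d G - kl_potential n E d (edge_step d f G)"
  shows "prob_mvec d (edge_step d f G)" and "0 \<le> \<Delta>"
    and "incident v f \<Longrightarrow> l1_dist {..<d} (nd (edge_step d f G) v) (nd G v) \<le> 2 * sqrt \<Delta>"
proof -
  define H where "H = norm_at d f (fst f) (proj_i d f G)"
  define \<Delta>\<^sub>1 where "\<Delta>\<^sub>1 = kl_potential n E d G - kl_potential n E d H"
  define \<Delta>\<^sub>2 where "\<Delta>\<^sub>2 = kl_potential n E d H - kl_potential n E d (edge_step d f G)"
  have step: "edge_step d f G = norm_at d f (snd f) (proj_j d f H)"
    by (simp add: edge_step_def H_def)
  note i = half_step_i_bounds[OF G E f, folded H_def, folded \<Delta>\<^sub>1_def]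
  note j = half_step_j_bounds[OF i(1) E f, folded step, folded \<Delta>\<^sub>2_def]
  have \<Delta>: "\<Delta> = \<Delta>\<^sub>1 + \<Delta>\<^sub>2" and \<Delta>\<^sub>1: "0 \<le> \<Delta>\<^sub>1" and \<Delta>\<^sub>2: "0 \<le> \<Delta>\<^sub>2"
    using i(2) j(2) by (simp_all add: \<Delta>_def \<Delta>\<^sub>1_def \<Delta>\<^sub>2_def)
  have ne: "fst f \<noteq> snd f" using graph_ok_edgeD[OF E f] by simp
  show "prob_mvec d (edge_step d f G)" by (rule j(1))
  show "0 \<le> \<Delta>" using \<Delta> \<Delta>\<^sub>1 \<Delta>\<^sub>2 by simp
  assume "incident v f"
  then consider "v = fst f" | "v = snd f" by (auto simp: incident_def)
  then show "l1_dist {..<d} (nd (edge_step d f G) v) (nd G v) \<le> 2 * sqrt \<Delta>"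
  proof cases
    case 1
    then have "l1_dist {..<d} (nd (edge_step d f G) v) (nd G v) \<le> 2 * sqrt \<Delta>\<^sub>1"
      using le_two_sqrt_of_sq_le[OF l1_dist_nonneg i(4)] ne by (simp add: step half_step_frame)
    then show ?thesis using \<Delta> \<Delta>\<^sub>2 by (smt (verit) real_sqrt_le_mono)
  next
    case 2
    then have "l1_dist {..<d} (nd (edge_step d f G) v) (nd G v) \<le> 2 * sqrt \<Delta>\<^sub>2"
      using le_two_sqrt_of_sq_le[OF l1_dist_nonneg j(4)] ne by (simp add: H_def half_step_frame)
    then show ?thesis using \<Delta> \<Delta>\<^sub>1 by (smt (verit) real_sqrt_le_mono)
  qed
qed

text \<open>The \<open>j\<close>-constraint is only enforced after the first half-step has already moved the
  column sums of the edge table; this costs the factor \<open>2\<close>.\<close>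

lemma edge_step_viol_le:
  assumes G: "prob_mvec d G" and E: "graph_ok n E" and f: "f \<in> E"
  shows "viol d G f \<le> 2 * sqrt (2 * (kl_potential n E d G - kl_potential n E d (edge_step d f G)))"
proof -
  define H where "H = norm_at d f (fst f) (proj_i d f G)"
  define \<Delta>\<^sub>1 where "\<Delta>\<^sub>1 = kl_potential n E d G - kl_potential n E d H"
  define \<Delta>\<^sub>2 where "\<Delta>\<^sub>2 = kl_potential n E d H - kl_potential n E d (edge_step d f G)"
  have step: "edge_step d f G = norm_at d f (snd f) (proj_j d f H)"
    by (simp add: edge_step_def H_def)
  note i = half_step_i_bounds[OF G E f, folded H_def, folded \<Delta>\<^sub>1_def]
  note j = half_step_j_bounds[OF i(1) E f, folded step, folded \<Delta>\<^sub>2_def]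
  have \<Delta>\<^sub>1: "0 \<le> \<Delta>\<^sub>1" and \<Delta>\<^sub>2: "0 \<le> \<Delta>\<^sub>2"
    using i(2) j(2) by (simp_all add: \<Delta>\<^sub>1_def \<Delta>\<^sub>2_def)
  have nd_H: "nd H (snd f) = nd G (snd f)"
    using graph_ok_edgeD[OF E f] by (simp add: H_def half_step_frame)
  have "viol_i d G f \<le> 2 * sqrt \<Delta>\<^sub>1"
    using le_two_sqrt_of_sq_le[OF _ i(3)] by (simp add: viol_i_eq_l1_dist l1_dist_nonneg)
  also have "\<dots> \<le> 2 * sqrt (2 * (\<Delta>\<^sub>1 + \<Delta>\<^sub>2))" using \<Delta>\<^sub>1 \<Delta>\<^sub>2 by simp
  finally have vi: "viol_i d G f \<le> 2 * sqrt (2 * (\<Delta>\<^sub>1 + \<Delta>\<^sub>2))" .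
  have "l1_dist {..<d} (row_marg {..<d} (\<lambda>b a. ed H f a b)) (row_marg {..<d} (\<lambda>b a. ed G f a b))
      \<le> l1_dist ({..<d} \<times> {..<d}) (case_prod (ed H f)) (case_prod (ed G f))"
    using l1_dist_row_marg_le l1_dist_transpose[where P = "ed H f" and Q = "ed G f"] by metis
  also have "\<dots> \<le> 2 * sqrt \<Delta>\<^sub>1"
    using le_two_sqrt_of_sq_le[OF l1_dist_nonneg i(5)] .
  finally have columns: "l1_dist {..<d} (row_marg {..<d} (\<lambda>b a. ed H f a b))
      (row_marg {..<d} (\<lambda>b a. ed G f a b)) \<le> 2 * sqrt (1 * \<Delta>\<^sub>1)" by simp
  have "viol_j d G f \<le> viol_j d H f
      + l1_dist {..<d} (row_marg {..<d} (\<lambda>b a. ed H f a b)) (row_marg {..<d} (\<lambda>b a. ed G f a b))"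
    unfolding viol_j_eq_l1_dist nd_H using l1_dist_triangle l1_dist_commute by metis
  also have "\<dots> \<le> 2 * sqrt (1 * \<Delta>\<^sub>2) + 2 * sqrt (1 * \<Delta>\<^sub>1)"
    using columns le_two_sqrt_of_sq_le[OF _ j(3)] by (simp add: viol_j_eq_l1_dist l1_dist_nonneg)
  also have "\<dots> \<le> 2 * sqrt (2 * (\<Delta>\<^sub>1 + \<Delta>\<^sub>2))"
    using sqrt_mult_add_le[of 1 1 \<Delta>\<^sub>2 \<Delta>\<^sub>1] \<Delta>\<^sub>1 \<Delta>\<^sub>2 by (simp add: add.commute)
  finally show ?thesis
    using vi by (simp add: viol_def \<Delta>\<^sub>1_def \<Delta>\<^sub>2_def)
qed

lemma fold_edge_step_frame: "e \<notin> set L \<Longrightarrow> ed (fold (edge_step d) L G) e = ed G e"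
  by (induction L arbitrary: G) (auto simp: edge_step_frame)

lemma fold_edge_step_bounds:
  assumes "prob_mvec d G" and E: "graph_ok n E" and "set L \<subseteq> E"
  shows "prob_mvec d (fold (edge_step d) L G)
    \<and> kl_potential n E d (fold (edge_step d) L G) \<le> kl_potential n E d G
    \<and> l1_dist {..<d} (nd (fold (edge_step d) L G) v) (nd G v)
      \<le> 2 * sqrt (real (length (filter (incident v) L))
          * (kl_potential n E d G - kl_potential n E d (fold (edge_step d) L G)))"
  using assms(1,3)
proof (induction L arbitrary: G)
  case Nil
  then show ?case by (simp add: l1_dist_def)
next
  case (Cons f L)
  define G\<^sub>1 where "G\<^sub>1 = edge_step d f G"
  define F where "F = fold (edge_step d) L G\<^sub>1"
  define k where "k = real (length (filter (incident v) L))"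
  define c :: real where "c = (if incident v f then 1 else 0)"
  have f: "f \<in> E" and L: "set L \<subseteq> E" using Cons.prems by auto
  note step = edge_step_bounds[OF Cons.prems(1) E f, folded G\<^sub>1_def]
  note IH = Cons.IH[OF step(1) L, folded F_def k_def]
  have \<Delta>\<^sub>1: "0 \<le> kl_potential n E d G - kl_potential n E d G\<^sub>1" by (rule step(2))
  have \<Delta>\<^sub>2: "0 \<le> kl_potential n E d G\<^sub>1 - kl_potential n E d F" using IH by simp
  have move: "l1_dist {..<d} (nd G\<^sub>1 v) (nd G v)
      \<le> 2 * sqrt (c * (kl_potential n E d G - kl_potential n E d G\<^sub>1))"
    using step(3) by (cases "incident v f") (simp_all add: c_def G\<^sub>1_def edge_step_frame l1_dist_def)
  have "l1_dist {..<d} (nd F v) (nd G v) \<le> l1_dist {..<d} (nd F v) (nd G\<^sub>1 v) + l1_dist {..<d} (nd G\<^sub>1 v) (nd G v)"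
    by (rule l1_dist_triangle)
  also have "\<dots> \<le> 2 * (sqrt (k * (kl_potential n E d G\<^sub>1 - kl_potential n E d F))
      + sqrt (c * (kl_potential n E d G - kl_potential n E d G\<^sub>1)))"
    using IH move by simp
  also have "\<dots> \<le> 2 * sqrt ((k + c) * (kl_potential n E d G - kl_potential n E d F))"
  proof -
    have "0 \<le> k" "0 \<le> c" by (simp_all add: k_def c_def)
    moreover have "(kl_potential n E d G\<^sub>1 - kl_potential n E d F) + (kl_potential n E d G - kl_potential n E d G\<^sub>1)
        = kl_potential n E d G - kl_potential n E d F" by simp
    ultimately show ?thesis using sqrt_mult_add_le[OF _ _ \<Delta>\<^sub>2 \<Delta>\<^sub>1, of k c] by simp
  qed
  also have "k + c = real (length (filter (incident v) (f # L)))"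
    by (simp add: k_def c_def)
  finally show ?case
    using IH step by (simp add: F_def G\<^sub>1_def)
qed

lemma incident_prefix_length_less_max_deg:
  assumes E: "graph_ok n E" and order: "distinct (L\<^sub>1 @ e # L\<^sub>2)" "set (L\<^sub>1 @ e # L\<^sub>2) = E"
    and v: "incident v e"
  shows "length (filter (incident v) L\<^sub>1) + 1 \<le> max_deg n E"
proof -
  have e: "e \<in> E" using order by auto
  then have "v \<in> {1..n}" using graph_ok_edgeD[OF E e] v by (auto simp: incident_def)
  have "length (filter (incident v) L\<^sub>1) = card (set (filter (incident v) L\<^sub>1))"
    using order(1) distinct_card[of "filter (incident v) L\<^sub>1"] by simp
  then have "length (filter (incident v) L\<^sub>1) + 1 = card (insert e (set (filter (incident v) L\<^sub>1)))"
    using order(1) by simp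
  also have "\<dots> \<le> card {f \<in> E. incident v f}"
    using order v graph_ok_finite[OF E] by (intro card_mono) auto
  also have "\<dots> \<le> max_deg n E"
    using graph_ok_finite[OF E] \<open>v \<in> {1..n}\<close> by (rule card_incident_le_max_deg)
  finally show ?thesis .
qed

lemma prefix_node_move_le:
  assumes G: "prob_mvec d G" and E: "graph_ok n E"
    and order: "distinct (L\<^sub>1 @ e # L\<^sub>2)" "set (L\<^sub>1 @ e # L\<^sub>2) = E" and v: "incident v e"
  shows "l1_dist {..<d} (nd (fold (edge_step d) L\<^sub>1 G) v) (nd G v)
    \<le> 2 * sqrt ((real (max_deg n E) - 1)
        * (kl_potential n E d G - kl_potential n E d (fold (edge_step d) L\<^sub>1 G)))"
proof -
  have "set L\<^sub>1 \<subseteq> E" using order(2) by auto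
  note prefix = fold_edge_step_bounds[OF G E this, of v]
  have "real (length (filter (incident v) L\<^sub>1)) \<le> real (max_deg n E) - 1"
    using incident_prefix_length_less_max_deg[OF E order v] by simp
  then show ?thesis
    using prefix by (smt (verit) mult_right_mono real_sqrt_le_mono)
qed

lemma viol_le_viol_add_moves:
  assumes "ed G' e = ed G e"
  shows "viol d G e \<le> viol d G' e
    + max (l1_dist {..<d} (nd G' (fst e)) (nd G (fst e))) (l1_dist {..<d} (nd G' (snd e)) (nd G (snd e)))"
proof -
  have "viol_i d G e \<le> viol_i d G' e + l1_dist {..<d} (nd G' (fst e)) (nd G (fst e))"
    unfolding viol_i_eq_l1_dist assms by (rule l1_dist_triangle)
  moreover have "viol_j d G e \<le> viol_j d G' e + l1_dist {..<d} (nd G' (snd e)) (nd G (snd e))"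
    unfolding viol_j_eq_l1_dist assms by (rule l1_dist_triangle)
  ultimately show ?thesis by (auto simp: viol_def max_def)
qed

text \<open>Before \<open>e\<close> is processed in a pass, at most \<open>max_deg n E - 1\<close> other edges have moved each
  endpoint of \<open>e\<close>; together with the factor \<open>2\<close> of \<open>edge_step_viol_le\<close> this gives \<open>max_deg n E + 1\<close>.\<close>

lemma cyclic_step_bounds:
  assumes G: "prob_mvec d G" and E: "graph_ok n E"
    and order: "distinct order" "set order = E" and e: "e \<in> E"
  shows "prob_mvec d (cyclic_step d order G)"
    and "(viol d G e)\<^sup>2 \<le> 4 * (real (max_deg n E) + 1)
      * (kl_potential n E d G - kl_potential n E d (cyclic_step d order G))"
proof -
  obtain L\<^sub>1 L\<^sub>2 where split: "order = L\<^sub>1 @ e # L\<^sub>2"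
    using e order(2) by (metis split_list)
  define G\<^sub>A where "G\<^sub>A = fold (edge_step d) L\<^sub>1 G"
  define G\<^sub>B where "G\<^sub>B = edge_step d e G\<^sub>A"
  define \<Phi> where "\<Phi> = kl_potential n E d"
  define K where "K = real (max_deg n E) - 1"
  have cyc: "cyclic_step d order G = fold (edge_step d) L\<^sub>2 G\<^sub>B"
    by (simp add: cyclic_step_def split G\<^sub>A_def G\<^sub>B_def)
  have L: "set L\<^sub>1 \<subseteq> E" "set L\<^sub>2 \<subseteq> E" "e \<notin> set L\<^sub>1"
    using order split by auto
  note A = fold_edge_step_bounds[OF G E L(1), folded G\<^sub>A_def \<Phi>_def]
  note B = edge_step_bounds[OF conjunct1[OF A] E e, folded G\<^sub>B_def \<Phi>_def]
  note C = fold_edge_step_bounds[OF B(1) E L(2), folded cyc \<Phi>_def]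
  show "prob_mvec d (cyclic_step d order G)" using C by simp
  have \<Delta>: "0 \<le> \<Phi> G - \<Phi> G\<^sub>A" "0 \<le> \<Phi> G\<^sub>A - \<Phi> G\<^sub>B" "\<Phi> (cyclic_step d order G) \<le> \<Phi> G\<^sub>B"
    using A B(2) C by simp_all
  have "0 \<le> K"
    using incident_prefix_length_less_max_deg[OF E order[unfolded split], of "fst e"]
    by (simp add: K_def incident_def)
  have "ed G\<^sub>A e = ed G e"
    unfolding G\<^sub>A_def by (rule fold_edge_step_frame[OF L(3)])
  moreover have "max (l1_dist {..<d} (nd G\<^sub>A (fst e)) (nd G (fst e)))
      (l1_dist {..<d} (nd G\<^sub>A (snd e)) (nd G (snd e))) \<le> 2 * sqrt (K * (\<Phi> G - \<Phi> G\<^sub>A))"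
    using prefix_node_move_le[OF G E order[unfolded split], of "fst e"]
      prefix_node_move_le[OF G E order[unfolded split], of "snd e"]
    by (simp add: incident_def G\<^sub>A_def \<Phi>_def K_def)
  ultimately have "viol d G e \<le> viol d G\<^sub>A e + 2 * sqrt (K * (\<Phi> G - \<Phi> G\<^sub>A))"
    using viol_le_viol_add_moves by (smt (verit))
  also have "\<dots> \<le> 2 * (sqrt (2 * (\<Phi> G\<^sub>A - \<Phi> G\<^sub>B)) + sqrt (K * (\<Phi> G - \<Phi> G\<^sub>A)))"
    using edge_step_viol_le[OF conjunct1[OF A] E e] by (simp add: G\<^sub>B_def \<Phi>_def)
  also have "\<dots> \<le> 2 * sqrt ((2 + K) * ((\<Phi> G\<^sub>A - \<Phi> G\<^sub>B) + (\<Phi> G - \<Phi> G\<^sub>A)))"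
    using sqrt_mult_add_le[of 2 K "\<Phi> G\<^sub>A - \<Phi> G\<^sub>B" "\<Phi> G - \<Phi> G\<^sub>A"] \<Delta> \<open>0 \<le> K\<close> by simp
  also have "\<dots> \<le> 2 * sqrt ((real (max_deg n E) + 1) * (\<Phi> G - \<Phi> (cyclic_step d order G)))"
    using \<Delta> \<open>0 \<le> K\<close> by (simp add: K_def add.commute mult_left_mono)
  finally have "(viol d G e)\<^sup>2
      \<le> (2 * sqrt ((real (max_deg n E) + 1) * (\<Phi> G - \<Phi> (cyclic_step d order G))))\<^sup>2"
    using viol_nonneg by (intro power_mono)
  also have "\<dots> = 4 * (real (max_deg n E) + 1) * (\<Phi> G - \<Phi> (cyclic_step d order G))"
    using \<Delta> by (simp add: power_mult_distrib)
  finally show "(viol d G e)\<^sup>2 \<le> 4 * (real (max_deg n E) + 1)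
      * (kl_potential n E d G - kl_potential n E d (cyclic_step d order G))"
    by (simp add: \<Phi>_def)
qed

lemma greedy_update_bounds:
  assumes G: "prob_mvec d G" and E: "graph_ok n E" and e: "e \<in> E"
  shows "prob_mvec d (greedy_update d e G)"
    and "(viol d G e)\<^sup>2 \<le> 4 * (kl_potential n E d G - kl_potential n E d (greedy_update d e G))"
  using half_step_i_bounds[OF G E e] half_step_j_bounds[OF G E e]
  by (auto simp: greedy_update_def viol_def max_def)

section \<open>Initialisation and iteration bounds\<close>

lemma nd_emp_init:
  "nd (emp_init d \<eta> C) i = (\<lambda>x. exp (- \<eta> * nd C i x) / (\<Sum>y\<in>{..<d}. exp (- \<eta> * nd C i y)))"
  by (simp add: emp_init_def)

lemma ed_emp_init:
  "case_prod (ed (emp_init d \<eta> C) e)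
     = (\<lambda>x. exp (- \<eta> * case_prod (ed C e) x) / (\<Sum>y\<in>{..<d} \<times> {..<d}. exp (- \<eta> * case_prod (ed C e) y)))"
  by (auto simp: emp_init_def fun_eq_iff sum.cartesian_product')

lemma prob_mvec_emp_init: "0 < d \<Longrightarrow> prob_mvec d (emp_init d \<eta> C)"
  unfolding prob_mvec_def nd_emp_init ed_emp_init by (intro conjI allI kl_unif_softmax(1)) auto

lemma kl_unif_emp_init_nd:
  assumes "0 < d"
  shows "kl_unif {..<d} (nd (emp_init d \<eta> C) i)
      \<le> ln (\<Sum>x<d. exp (- \<eta> * nd C i x)) + (\<Sum>x<d. \<eta> / real d * nd C i x)"
    and "kl_unif {..<d} (nd (emp_init d \<eta> C) i)
      \<le> (\<Sum>x<d. \<bar>\<eta> * nd C i x / real d + exp (- \<eta> * nd C i x)\<bar>)"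
proof -
  have d: "{..<d} \<noteq> {}" "1 \<le> real d" "real d \<le> real (card {..<d})"
    using assms by auto
  note kl = kl_unif_softmax_le[OF finite_lessThan d, of "\<lambda>x. - \<eta> * nd C i x", folded nd_emp_init]
  show "kl_unif {..<d} (nd (emp_init d \<eta> C) i)
      \<le> ln (\<Sum>x<d. exp (- \<eta> * nd C i x)) + (\<Sum>x<d. \<eta> / real d * nd C i x)"
    using kl(1) by (simp add: sum_negf sum_divide_distrib)
  have "kl_unif {..<d} (nd (emp_init d \<eta> C) i)
      \<le> (\<Sum>x<d. exp (- \<eta> * nd C i x)) - (\<Sum>x<d. - \<eta> * nd C i x) / real d"
    using kl(2) by simp
  also have "\<dots> = (\<Sum>x<d. \<eta> * nd C i x / real d + exp (- \<eta> * nd C i x))"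
    by (simp add: sum.distrib sum_negf sum_divide_distrib)
  also have "\<dots> \<le> (\<Sum>x<d. \<bar>\<eta> * nd C i x / real d + exp (- \<eta> * nd C i x)\<bar>)"
    by (intro sum_mono) simp
  finally show "kl_unif {..<d} (nd (emp_init d \<eta> C) i)
      \<le> (\<Sum>x<d. \<bar>\<eta> * nd C i x / real d + exp (- \<eta> * nd C i x)\<bar>)" .
qed

lemma kl_unif_emp_init_ed:
  assumes "0 < d"
  shows "kl_unif ({..<d} \<times> {..<d}) (case_prod (ed (emp_init d \<eta> C) e))
      \<le> ln (\<Sum>x<d. \<Sum>y<d. exp (- \<eta> * ed C e x y)) + (\<Sum>x<d. \<Sum>y<d. \<eta> / (real d)\<^sup>2 * ed C e x y)"
    and "kl_unif ({..<d} \<times> {..<d}) (case_prod (ed (emp_init d \<eta> C) e))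
      \<le> (\<Sum>x<d. \<Sum>y<d. \<bar>\<eta> * ed C e x y / real d + exp (- \<eta> * ed C e x y)\<bar>)"
proof -
  have d: "{..<d} \<times> {..<d} \<noteq> {}" "1 \<le> real d" "real d \<le> real (card ({..<d} \<times> {..<d}))"
    using assms by (simp_all add: card_cartesian_product lessThan_empty_iff)
  note kl = kl_unif_softmax_le[OF finite_cartesian_product[OF finite_lessThan finite_lessThan] d,
      of "\<lambda>x. - \<eta> * case_prod (ed C e) x", folded ed_emp_init, unfolded sum.cartesian_product']
  show "kl_unif ({..<d} \<times> {..<d}) (case_prod (ed (emp_init d \<eta> C) e))
      \<le> ln (\<Sum>x<d. \<Sum>y<d. exp (- \<eta> * ed C e x y)) + (\<Sum>x<d. \<Sum>y<d. \<eta> / (real d)\<^sup>2 * ed C e x y)"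
    using kl(1) by (simp add: sum_negf sum_divide_distrib card_cartesian_product power2_eq_square)
  have "kl_unif ({..<d} \<times> {..<d}) (case_prod (ed (emp_init d \<eta> C) e))
      \<le> (\<Sum>x<d. \<Sum>y<d. exp (- \<eta> * ed C e x y)) - (\<Sum>x<d. \<Sum>y<d. - \<eta> * ed C e x y) / real d"
    using kl(2) by simp
  also have "\<dots> = (\<Sum>x<d. \<Sum>y<d. \<eta> * ed C e x y / real d + exp (- \<eta> * ed C e x y))"
    by (simp add: sum.distrib sum_negf sum_divide_distrib)
  also have "\<dots> \<le> (\<Sum>x<d. \<Sum>y<d. \<bar>\<eta> * ed C e x y / real d + exp (- \<eta> * ed C e x y)\<bar>)"
    by (intro sum_mono) simp
  finally show "kl_unif ({..<d} \<times> {..<d}) (case_prod (ed (emp_init d \<eta> C) e))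
      \<le> (\<Sum>x<d. \<Sum>y<d. \<bar>\<eta> * ed C e x y / real d + exp (- \<eta> * ed C e x y)\<bar>)" .
qed

lemma kl_potential_emp_init_le:
  assumes "0 < d"
  shows "kl_potential n E d (emp_init d \<eta> C) \<le> S0 n E d \<eta> C"
  unfolding S0_def
proof (rule min.boundedI)
  show "kl_potential n E d (emp_init d \<eta> C) \<le> L1_term n E d \<eta> C"
    unfolding kl_potential_def L1_term_def
    by (intro add_mono sum_mono kl_unif_emp_init_ed(2)[OF assms] kl_unif_emp_init_nd(2)[OF assms])
  show "kl_potential n E d (emp_init d \<eta> C) \<le> S_val n E d \<eta> C"
    unfolding kl_potential_def S_val_def
    by (intro add_mono sum_mono kl_unif_emp_init_ed(1)[OF assms] kl_unif_emp_init_nd(1)[OF assms])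
qed

lemma potential_descent_stops:
  fixes \<Phi> :: "nat \<Rightarrow> real" and inv stop :: "nat \<Rightarrow> bool"
  assumes c: "0 < c" and inv0: "inv 0" and \<Phi>0: "\<Phi> 0 \<le> S"
    and nonneg: "\<And>t. inv t \<Longrightarrow> 0 \<le> \<Phi> t"
    and step: "\<And>t. inv t \<Longrightarrow> \<not> stop t \<Longrightarrow> inv (Suc t) \<and> \<Phi> (Suc t) \<le> \<Phi> t - c"
  shows "\<exists>t \<le> nat \<lceil>S / c\<rceil>. stop t"
proof (rule ccontr)
  define N where "N = nat \<lceil>S / c\<rceil>"
  assume "\<not> (\<exists>t \<le> nat \<lceil>S / c\<rceil>. stop t)"
  then have running: "\<And>t. t \<le> N \<Longrightarrow> \<not> stop t" unfolding N_def by auto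
  have "inv t \<and> \<Phi> t \<le> S - real t * c" if "t \<le> N + 1" for t
    using that
  proof (induction t)
    case 0
    then show ?case using inv0 \<Phi>0 by simp
  next
    case (Suc t)
    then have "inv t" "\<Phi> t \<le> S - real t * c" "\<not> stop t" using running by auto
    then show ?case using step[of t] by (auto simp: algebra_simps)
  qed
  then have "0 \<le> S - real (N + 1) * c" using nonneg by (meson order_trans order_refl)
  moreover have "S / c \<le> real N" unfolding N_def by linarith
  then have "S \<le> real N * c" using c by (simp add: divide_le_eq)
  ultimately show False using c by (simp add: algebra_simps)
qed

lemma emp_stops_within:
  fixes \<Gamma> :: "nat \<Rightarrow> mvec"
  assumes \<epsilon>: "0 < \<epsilon>" and c: "0 < c" and \<Gamma>0: "\<Gamma> 0 = emp_init d \<eta> C"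
    and step: "\<And>t. prob_mvec d (\<Gamma> t) \<Longrightarrow> \<not> stop_crit d E \<epsilon> (\<Gamma> t) \<Longrightarrow>
      prob_mvec d (\<Gamma> (Suc t)) \<and> c \<le> kl_potential n E d (\<Gamma> t) - kl_potential n E d (\<Gamma> (Suc t))"
  shows "\<exists>t \<le> nat \<lceil>S0 n E d \<eta> C / c\<rceil>. stop_crit d E \<epsilon> (\<Gamma> t)"
proof (cases "d = 0")
  case True
  then show ?thesis using stop_crit_zero_dim[OF \<epsilon>] by (intro exI[of _ 0]) simp
next
  case False
  show ?thesis
  proof (rule potential_descent_stops[OF c, where inv = "\<lambda>t. prob_mvec d (\<Gamma> t)"])
    show "prob_mvec d (\<Gamma> 0)" using False by (simp add: \<Gamma>0 prob_mvec_emp_init)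
    show "kl_potential n E d (\<Gamma> 0) \<le> S0 n E d \<eta> C" using False by (simp add: \<Gamma>0 kl_potential_emp_init_le)
  qed (use step kl_potential_nonneg in fastforce)+
qed

lemma emp_cyclic_stops:
  assumes E: "graph_ok n E" and \<epsilon>: "0 < \<epsilon>" and order: "distinct order" "set order = E"
  shows "\<exists>t \<le> nat \<lceil>4 * S0 n E d \<eta> C * (real (max_deg n E) + 1) / \<epsilon>\<^sup>2\<rceil>.
    stop_crit d E \<epsilon> ((cyclic_step d order ^^ t) (emp_init d \<eta> C))"
proof -
  define c where "c = \<epsilon>\<^sup>2 / (4 * (real (max_deg n E) + 1))"
  have "\<exists>t \<le> nat \<lceil>S0 n E d \<eta> C / c\<rceil>. stop_crit d E \<epsilon> ((cyclic_step d order ^^ t) (emp_init d \<eta> C))"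
  proof (rule emp_stops_within[OF \<epsilon>])
    show "0 < c" using \<epsilon> by (simp add: c_def)
    fix t
    let ?G = "(cyclic_step d order ^^ t) (emp_init d \<eta> C)"
    assume G: "prob_mvec d ?G" and "\<not> stop_crit d E \<epsilon> ?G"
    then obtain e where e: "e \<in> E" "\<epsilon> \<le> viol d ?G e" using not_stop_crit_viol by blast
    note bounds = cyclic_step_bounds[OF G E order e(1)]
    have "\<epsilon>\<^sup>2 \<le> (viol d ?G e)\<^sup>2" using \<epsilon> e(2) by (intro power_mono) auto
    with bounds(2) have "c \<le> kl_potential n E d ?G - kl_potential n E d (cyclic_step d order ?G)"
      by (simp add: c_def divide_le_eq mult.commute mult.left_commute)
    then show "prob_mvec d ((cyclic_step d order ^^ Suc t) (emp_init d \<eta> C)) \<and>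
      c \<le> kl_potential n E d ?G - kl_potential n E d ((cyclic_step d order ^^ Suc t) (emp_init d \<eta> C))"
      using bounds(1) by simp
  qed simp
  moreover have "S0 n E d \<eta> C / c = 4 * S0 n E d \<eta> C * (real (max_deg n E) + 1) / \<epsilon>\<^sup>2"
    using \<epsilon> by (simp add: c_def field_simps)
  ultimately show ?thesis by simp
qed

lemma emp_greedy_stops:
  fixes \<Gamma> :: "nat \<Rightarrow> mvec"
  assumes E: "graph_ok n E" and \<epsilon>: "0 < \<epsilon>" and \<Gamma>0: "\<Gamma> 0 = emp_init d \<eta> C"
    and greedy: "\<forall>t. \<not> stop_crit d E \<epsilon> (\<Gamma> t) \<longrightarrow>
      (\<exists>e\<in>E. (\<forall>e'\<in>E. viol d (\<Gamma> t) e' \<le> viol d (\<Gamma> t) e) \<and> \<Gamma> (Suc t) = greedy_update d e (\<Gamma> t))"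
  shows "\<exists>t \<le> nat \<lceil>4 * S0 n E d \<eta> C / \<epsilon>\<^sup>2\<rceil>. stop_crit d E \<epsilon> (\<Gamma> t)"
proof -
  have "\<exists>t \<le> nat \<lceil>S0 n E d \<eta> C / (\<epsilon>\<^sup>2 / 4)\<rceil>. stop_crit d E \<epsilon> (\<Gamma> t)"
  proof (rule emp_stops_within[OF \<epsilon>])
    show "0 < \<epsilon>\<^sup>2 / 4" using \<epsilon> by simp
    show "\<Gamma> 0 = emp_init d \<eta> C" by (rule \<Gamma>0)
    fix t
    assume G: "prob_mvec d (\<Gamma> t)" and running: "\<not> stop_crit d E \<epsilon> (\<Gamma> t)"
    obtain e where e: "e \<in> E" and worst: "\<forall>e'\<in>E. viol d (\<Gamma> t) e' \<le> viol d (\<Gamma> t) e"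
      and next_step: "\<Gamma> (Suc t) = greedy_update d e (\<Gamma> t)"
      using greedy running by blast
    obtain e' where "e' \<in> E" "\<epsilon> \<le> viol d (\<Gamma> t) e'" using not_stop_crit_viol[OF running] by blast
    then have "\<epsilon> \<le> viol d (\<Gamma> t) e" using worst by fastforce
    then have "\<epsilon>\<^sup>2 \<le> (viol d (\<Gamma> t) e)\<^sup>2" using \<epsilon> by (intro power_mono) auto
    then show "prob_mvec d (\<Gamma> (Suc t)) \<and>
        \<epsilon>\<^sup>2 / 4 \<le> kl_potential n E d (\<Gamma> t) - kl_potential n E d (\<Gamma> (Suc t))"
      using greedy_update_bounds[OF G E e] by (simp add: next_step)
  qed
  then show ?thesis by (simp add: mult.commute)
qed

theorem theorem2:
  fixes n d :: nat and E :: "(nat \<times> nat) set" and C :: mvec and \<eta> \<epsilon> :: real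
  assumes "graph_ok n E" and "\<eta> > 0" and "\<epsilon> > 0"
  shows "(\<forall>order. distinct order \<and> set order = E \<longrightarrow>
           (\<exists>t \<le> nat \<lceil>4 * S0 n E d \<eta> C * (real (max_deg n E) + 1) / \<epsilon>^2\<rceil>.
              stop_crit d E \<epsilon> ((cyclic_step d order ^^ t) (emp_init d \<eta> C))))
       \<and> (\<forall>\<Gamma> :: nat \<Rightarrow> mvec. \<Gamma> 0 = emp_init d \<eta> C \<and>
           (\<forall>t. \<not> stop_crit d E \<epsilon> (\<Gamma> t) \<longrightarrow>
              (\<exists>e\<in>E. (\<forall>e'\<in>E. viol d (\<Gamma> t) e' \<le> viol d (\<Gamma> t) e)
                     \<and> \<Gamma> (Suc t) = greedy_update d e (\<Gamma> t)))
           \<longrightarrow> (\<exists>t \<le> nat \<lceil>4 * S0 n E d \<eta> C / \<epsilon>^2\<rceil>. stop_crit d E \<epsilon> (\<Gamma> t)))"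
  using emp_cyclic_stops[OF assms(1,3)] emp_greedy_stops[OF assms(1,3)] by blast

end
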